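(* Let $(E,\mathscr{T},\le)$ be a completely regularly ordered space, let $\beta:E\to(\beta E,\mathscr{T}_\beta,\le_\beta)$ be the Stone–Čech compactification endowed with the preorder $G(\le_\beta)=\bigcap_{f\in\mathcal{F}}G_{\tilde f}$ ($\mathcal{F}$ the family of continuous isotone functions $f:E\to[0,1]$, $\tilde f$ the unique continuous extension of $f\circ\beta^{-1}$ to $\beta E$), and let $\Pi:\beta E\to\beta E/\!\sim_\beta$ be the quotient projection onto the $T_2$-ordered space $(\beta E/\!\sim_\beta,\mathscr{T}_\beta/\!\sim_\beta,\lesssim_\beta)$. Then $\Pi\circ\beta:E\to\beta E/\!\sim_\beta$ is a $T_2$-order compactification equivalent to the Nachbin $T_2$-order compactification $n:E\to nE$.
   Context: A topological ordered space $(E,\mathscr{T},\le)$ is completely regularly ordered if $\le$ is an order, $\mathscr{T}$ is the initial topology of the continuous isotone functions $E\to[0,1]$, and $x\le y$ iff $f(x)\le f(y)$ for all such functions. Isotone: $x\le y\Rightarrow f(x)\le f(y)$; $G_f=\{(x,y):f(x)\le f(y)\}$. $x\sim_\beta y$ means $x\le_\beta y$ and $y\le_\beta x$; the quotient carries the quotient topology and the order $[x]\lesssim_\beta[y]$ iff $x\le_\beta y$. $T_2$-ordered: order with closed graph. A $T_2$-order compactification of $E$ is a map $c:E\to cE$ into a compact Hausdorff $T_2$-ordered space, which is a homeomorphism onto its dense image and is isotone with isotone inverse on the image. $c_1\le c_2$ means there is a continuous isotone $C:c_2E\to c_1E$ with $C\circ c_2=c_1$; equivalent: both directions. The Nachbin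 $T_2$-order compactification is the (unique up to equivalence) $T_2$-order compactification $n:E\to nE$ to which every continuous isotone function $E\to[0,1]$ extends as a continuous isotone function. *)

theory Defs
  imports "HOL-Analysis.Analysis"
begin

definition cont_isotone_01 :: "'a topology \<Rightarrow> ('a \<Rightarrow> 'a \<Rightarrow> bool) \<Rightarrow> ('a \<Rightarrow> real) set" where
  "cont_isotone_01 X le = {f. continuous_map X (top_of_set {0..1}) f \<and>
       (\<forall>x\<in>topspace X. \<forall>y\<in>topspace X. le x y \<longrightarrow> f x \<le> f y)}"

definition order_on :: "'a set \<Rightarrow> ('a \<Rightarrow> 'a \<Rightarrow> bool) \<Rightarrow> bool" where
  "order_on S le \<longleftrightarrow> (\<forall>x\<in>S. le x x) \<and>
     (\<forall>x\<in>S. \<forall>y\<in>S. le x y \<and> le y x \<longrightarrow> x = y) \<and>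
     (\<forall>x\<in>S. \<forall>y\<in>S. \<forall>z\<in>S. le x y \<and> le y z \<longrightarrow> le x z)"

definition completely_regularly_ordered :: "'a topology \<Rightarrow> ('a \<Rightarrow> 'a \<Rightarrow> bool) \<Rightarrow> bool" where
  "completely_regularly_ordered X le \<longleftrightarrow>
     order_on (topspace X) le \<and>
     X = topology_generated_by
           {{x \<in> topspace X. f x \<in> U} | f U. f \<in> cont_isotone_01 X le \<and> open U} \<and>
     (\<forall>x\<in>topspace X. \<forall>y\<in>topspace X.
        le x y \<longleftrightarrow> (\<forall>f\<in>cont_isotone_01 X le. f x \<le> f y))"

definition T2_ordered :: "'a topology \<Rightarrow> ('a \<Rightarrow> 'a \<Rightarrow> bool) \<Rightarrow> bool" where
  "T2_ordered Y le \<longleftrightarrow> order_on (topspace Y) le \<and>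
     closedin (prod_topology Y Y) {(x, y). x \<in> topspace Y \<and> y \<in> topspace Y \<and> le x y}"

definition T2_order_compactification ::
  "'a topology \<Rightarrow> ('a \<Rightarrow> 'a \<Rightarrow> bool) \<Rightarrow> ('a \<Rightarrow> 'c) \<Rightarrow> 'c topology \<Rightarrow> ('c \<Rightarrow> 'c \<Rightarrow> bool) \<Rightarrow> bool" where
  "T2_order_compactification X le c Y leY \<longleftrightarrow>
     compact_space Y \<and> Hausdorff_space Y \<and> T2_ordered Y leY \<and>
     embedding_map X Y c \<and>
     Y closure_of (c ` topspace X) = topspace Y \<and>
     (\<forall>x\<in>topspace X. \<forall>y\<in>topspace X. le x y \<longleftrightarrow> leY (c x) (c y))"

definition compactification_le ::
  "'a topology \<Rightarrow> ('a \<Rightarrow> 'c) \<Rightarrow> 'c topology \<Rightarrow> ('c \<Rightarrow> 'c \<Rightarrow> bool)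
   \<Rightarrow> ('a \<Rightarrow> 'd) \<Rightarrow> 'd topology \<Rightarrow> ('d \<Rightarrow> 'd \<Rightarrow> bool) \<Rightarrow> bool" where
  "compactification_le X c1 Y1 le1 c2 Y2 le2 \<longleftrightarrow>
     (\<exists>C. continuous_map Y2 Y1 C \<and>
          (\<forall>u\<in>topspace Y2. \<forall>v\<in>topspace Y2. le2 u v \<longrightarrow> le1 (C u) (C v)) \<and>
          (\<forall>x\<in>topspace X. C (c2 x) = c1 x))"

definition compactification_equiv ::
  "'a topology \<Rightarrow> ('a \<Rightarrow> 'c) \<Rightarrow> 'c topology \<Rightarrow> ('c \<Rightarrow> 'c \<Rightarrow> bool)
   \<Rightarrow> ('a \<Rightarrow> 'd) \<Rightarrow> 'd topology \<Rightarrow> ('d \<Rightarrow> 'd \<Rightarrow> bool) \<Rightarrow> bool" where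
  "compactification_equiv X c1 Y1 le1 c2 Y2 le2 \<longleftrightarrow>
     compactification_le X c1 Y1 le1 c2 Y2 le2 \<and> compactification_le X c2 Y2 le2 c1 Y1 le1"

definition Nachbin_compactification ::
  "'a topology \<Rightarrow> ('a \<Rightarrow> 'a \<Rightarrow> bool) \<Rightarrow> ('a \<Rightarrow> 'c) \<Rightarrow> 'c topology \<Rightarrow> ('c \<Rightarrow> 'c \<Rightarrow> bool) \<Rightarrow> bool" where
  "Nachbin_compactification X le n Y leY \<longleftrightarrow>
     T2_order_compactification X le n Y leY \<and>
     (\<forall>f\<in>cont_isotone_01 X le. \<exists>g\<in>cont_isotone_01 Y leY. \<forall>x\<in>topspace X. g (n x) = f x)"

definition Stone_Cech_compactification :: "'a topology \<Rightarrow> ('a \<Rightarrow> 'b) \<Rightarrow> 'b topology \<Rightarrow> bool" where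
  "Stone_Cech_compactification X bt B \<longleftrightarrow>
     compact_space B \<and> Hausdorff_space B \<and> embedding_map X B bt \<and>
     B closure_of (bt ` topspace X) = topspace B \<and>
     (\<forall>f::'a \<Rightarrow> real. continuous_map X (top_of_set {0..1}) f \<longrightarrow>
        (\<exists>g. continuous_map B (top_of_set {0..1::real}) g \<and> (\<forall>x\<in>topspace X. g (bt x) = f x)))"

text \<open>The preorder on \<beta>E: x \<le>_beta y iff f~ x \<le> f~ y for every continuous isotone f, where
  f~ is the (unique, by density and Hausdorffness) continuous extension of f \<circ> \<beta>\<inverse>.\<close>
definition beta_le :: "'a topology \<Rightarrow> ('a \<Rightarrow> 'a \<Rightarrow> bool) \<Rightarrow> ('a \<Rightarrow> 'b) \<Rightarrow> 'b topology \<Rightarrow> 'b \<Rightarrow> 'b \<Rightarrow> bool" where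
  "beta_le X le bt B x y \<longleftrightarrow> x \<in> topspace B \<and> y \<in> topspace B \<and>
     (\<forall>f\<in>cont_isotone_01 X le. \<forall>g. continuous_map B (top_of_set {0..1::real}) g \<and>
          (\<forall>e\<in>topspace X. g (bt e) = f e) \<longrightarrow> g x \<le> g y)"

definition beta_class :: "'a topology \<Rightarrow> ('a \<Rightarrow> 'a \<Rightarrow> bool) \<Rightarrow> ('a \<Rightarrow> 'b) \<Rightarrow> 'b topology \<Rightarrow> 'b \<Rightarrow> 'b set" where
  "beta_class X le bt B x = {y \<in> topspace B. beta_le X le bt B x y \<and> beta_le X le bt B y x}"

definition quotient_topology :: "'a topology \<Rightarrow> ('a \<Rightarrow> 'b) \<Rightarrow> 'b topology" where
  "quotient_topology X p = topology (\<lambda>U. U \<subseteq> p ` topspace X \<and> openin X {x \<in> topspace X. p x \<in> U})"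

definition beta_quot_le :: "'a topology \<Rightarrow> ('a \<Rightarrow> 'a \<Rightarrow> bool) \<Rightarrow> ('a \<Rightarrow> 'b) \<Rightarrow> 'b topology \<Rightarrow> 'b set \<Rightarrow> 'b set \<Rightarrow> bool" where
  "beta_quot_le X le bt B P Q \<longleftrightarrow>
     (\<exists>x\<in>topspace B. \<exists>y\<in>topspace B. P = beta_class X le bt B x \<and> Q = beta_class X le bt B y \<and>
        beta_le X le bt B x y)"

end

theory Submission
  imports Defs
begin

text \<open>The order on \<open>\<beta>E\<close> is cut out by the extensions \<open>f~\<close> of the continuous isotone
  \<open>f : E \<rightarrow> [0,1]\<close>, and on \<open>\<beta>E/\<sim>\<^sub>\<beta>\<close> these functions separate points. Hence the quotient is a
  compact \<open>T\<^sub>2\<close>-ordered space; \<open>E\<close> embeds into it densely because its topology is the initial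
  one of these \<open>f\<close>, and every \<open>f\<close> extends to it. So \<open>\<Pi> \<circ> \<beta>\<close> is a Nachbin compactification.
  Nachbin compactifications are unique: by Nachbin's ordered Urysohn lemma the continuous isotone
  functions of a compact \<open>T\<^sub>2\<close>-ordered space determine its points and its order, so any
  \<open>T\<^sub>2\<close>-order compactification is the image of a Nachbin one, compatibly with the order.\<close>

section \<open>Compact \<open>T\<^sub>2\<close>-ordered spaces\<close>

definition down_closure :: "'a topology \<Rightarrow> ('a \<Rightarrow> 'a \<Rightarrow> bool) \<Rightarrow> 'a set \<Rightarrow> 'a set" where
  "down_closure Y le S = {x \<in> topspace Y. \<exists>y\<in>S. le x y}"

definition up_closure :: "'a topology \<Rightarrow> ('a \<Rightarrow> 'a \<Rightarrow> bool) \<Rightarrow> 'a set \<Rightarrow> 'a set" where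
  "up_closure Y le S = {x \<in> topspace Y. \<exists>y\<in>S. le y x}"

definition decreasing_in :: "'a topology \<Rightarrow> ('a \<Rightarrow> 'a \<Rightarrow> bool) \<Rightarrow> 'a set \<Rightarrow> bool" where
  "decreasing_in Y le S \<longleftrightarrow> S \<subseteq> topspace Y \<and> (\<forall>x\<in>topspace Y. \<forall>y\<in>S. le x y \<longrightarrow> x \<in> S)"

lemma T2_ordered_trans:
  "\<lbrakk>T2_ordered Y le; x \<in> topspace Y; y \<in> topspace Y; z \<in> topspace Y; le x y; le y z\<rbrakk> \<Longrightarrow> le x z"
  and T2_ordered_refl: "\<lbrakk>T2_ordered Y le; x \<in> topspace Y\<rbrakk> \<Longrightarrow> le x x"
  and T2_ordered_antisym: "\<lbrakk>T2_ordered Y le; x \<in> topspace Y; y \<in> topspace Y; le x y; le y x\<rbrakk> \<Longrightarrow> x = y"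
  unfolding T2_ordered_def order_on_def by blast+

lemma T2_ordered_imp_Hausdorff_space:
  assumes "T2_ordered Y le"
  shows "Hausdorff_space Y"
proof -
  define G where "G = {(x, y). x \<in> topspace Y \<and> y \<in> topspace Y \<and> le x y}"
  have G: "closedin (prod_topology Y Y) G"
    using assms by (simp add: T2_ordered_def G_def)
  have "closedin (prod_topology Y Y) {z \<in> topspace (prod_topology Y Y). (\<lambda>(x, y). (y, x)) z \<in> G}"
    using closedin_continuous_map_preimage[OF homeomorphic_imp_continuous_map[OF homeomorphic_map_swap] G] .
  then have "closedin (prod_topology Y Y) (G \<inter> {z \<in> topspace (prod_topology Y Y). (\<lambda>(x, y). (y, x)) z \<in> G})"
    using G by blast
  moreover have "G \<inter> {z \<in> topspace (prod_topology Y Y). (\<lambda>(x, y). (y, x)) z \<in> G} = (\<lambda>x. (x, x)) ` topspace Y"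
    using T2_ordered_refl[OF assms] T2_ordered_antisym[OF assms] unfolding G_def by auto
  ultimately show ?thesis
    by (simp add: Hausdorff_space_closedin_diagonal)
qed

lemma closedin_down_up_closure:
  assumes "compact_space Y" "T2_ordered Y le" "closedin Y C"
  shows "closedin Y (down_closure Y le C) \<and> closedin Y (up_closure Y le C)"
proof -
  define G where "G = {(x, y). x \<in> topspace Y \<and> y \<in> topspace Y \<and> le x y}"
  have "closedin (prod_topology Y Y) G"
    using assms(2) by (simp add: T2_ordered_def G_def)
  then have "closedin (prod_topology Y Y) (G \<inter> (topspace Y \<times> C))"
    and "closedin (prod_topology Y Y) (G \<inter> (C \<times> topspace Y))"
    using assms(3) by (simp_all add: closedin_Int closedin_prod_Times_iff)
  moreover have "compact_space (prod_topology Y Y)"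
    using assms(1) by (simp add: compact_space_prod_topology)
  ultimately have "compactin Y (fst ` (G \<inter> (topspace Y \<times> C)))"
    and "compactin Y (snd ` (G \<inter> (C \<times> topspace Y)))"
    by (metis closedin_compact_space image_compactin continuous_map_fst continuous_map_snd)+
  moreover have "fst ` (G \<inter> (topspace Y \<times> C)) = down_closure Y le C"
    and "snd ` (G \<inter> (C \<times> topspace Y)) = up_closure Y le C"
    using closedin_subset[OF assms(3)] unfolding G_def down_closure_def up_closure_def by force+
  ultimately show ?thesis
    using compactin_imp_closedin T2_ordered_imp_Hausdorff_space[OF assms(2)] by metis
qed

text \<open>The largest decreasing subset of a neighbourhood \<open>U\<close> of \<open>A\<close> separated from \<open>topspace Y - V\<close>
  works: it is the complement of the closed set \<open>up_closure Y le (topspace Y - U)\<close>.\<close>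
lemma decreasing_open_separation:
  assumes "compact_space Y" "T2_ordered Y le"
    and "closedin Y A" "decreasing_in Y le A" "openin Y V" "decreasing_in Y le V" "A \<subseteq> V"
  shows "\<exists>W. openin Y W \<and> decreasing_in Y le W \<and> A \<subseteq> W \<and> down_closure Y le (Y closure_of W) \<subseteq> V"
proof -
  have "normal_space Y"
    using assms(1) T2_ordered_imp_Hausdorff_space[OF assms(2)] compact_Hausdorff_or_regular_imp_normal_space
    by blast
  moreover have "closedin Y (topspace Y - V)" "disjnt A (topspace Y - V)"
    using assms(5,7) by (auto simp: disjnt_def)
  ultimately obtain U V0 where U: "openin Y U" "openin Y V0" "A \<subseteq> U"
    "topspace Y - V \<subseteq> V0" "disjnt U V0"
    using assms(3) unfolding normal_space_def by meson
  define W where "W = topspace Y - up_closure Y le (topspace Y - U)"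
  have "openin Y W"
    unfolding W_def using closedin_down_up_closure[OF assms(1,2), of "topspace Y - U"] U(1) by auto
  moreover have "decreasing_in Y le W"
    using T2_ordered_trans[OF assms(2)] unfolding decreasing_in_def W_def up_closure_def by blast
  moreover have "A \<subseteq> W"
    using assms(4) U(3) unfolding decreasing_in_def W_def up_closure_def by blast
  moreover have "down_closure Y le (Y closure_of W) \<subseteq> V"
  proof -
    have "W \<subseteq> topspace Y - V0"
      using T2_ordered_refl[OF assms(2)] U(5) unfolding W_def up_closure_def disjnt_def by blast
    then have "Y closure_of W \<subseteq> topspace Y - V0"
      using U(2) by (simp add: closure_of_minimal closedin_diff)
    then have "Y closure_of W \<subseteq> V"
      using U(4) by blast
    then show ?thesis
      using assms(6) unfolding down_closure_def decreasing_in_def by blast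
  qed
  ultimately show ?thesis
    by blast
qed

section \<open>Urysohn functions of dyadic families of open sets\<close>

lemma dyadic_between:
  assumes "0 \<le> a" "a < b"
  obtains r :: real where "r \<in> dyadics" "a < r" "r < b"
proof -
  obtain n q r where "real q / 2^n \<le> a" "a < real r / 2^n" "\<bar>real q / 2^n - real r / 2^n\<bar> < b - a"
    by (rule padic_rational_approximation_straddle_pos_le[of "b - a" 2 a]) (use assms in auto)
  then show thesis
    using that[of "real r / 2^n"] by (auto simp: dyadics_def)
qed

definition Urysohn_family :: "'a topology \<Rightarrow> (real \<Rightarrow> 'a set) \<Rightarrow> bool" where
  "Urysohn_family Y G \<longleftrightarrow> (\<forall>r \<in> dyadics \<inter> {0..1}. openin Y (G r)) \<and>
     (\<forall>r \<in> dyadics \<inter> {0..1}. \<forall>s \<in> dyadics \<inter> {0..1}. r < s \<longrightarrow> Y closure_of (G r) \<subseteq> G s)"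

definition Urysohn_function :: "(real \<Rightarrow> 'a set) \<Rightarrow> 'a \<Rightarrow> real" where
  "Urysohn_function G x = Inf (insert 1 {r \<in> dyadics \<inter> {0..1}. x \<in> G r})"

lemma Urysohn_family_subset:
  assumes "Urysohn_family Y G" "r \<in> dyadics \<inter> {0..1}" "s \<in> dyadics \<inter> {0..1}" "r < s"
  shows "G r \<subseteq> G s"
  using assms closure_of_subset[OF openin_subset] unfolding Urysohn_family_def by blast

lemma Urysohn_function_nonneg: "0 \<le> Urysohn_function G x"
  unfolding Urysohn_function_def by (force intro: cInf_greatest)

lemma Urysohn_function_le_1: "Urysohn_function G x \<le> 1"
  unfolding Urysohn_function_def by (force intro: cInf_lower)

lemma Urysohn_function_le: "\<lbrakk>r \<in> dyadics \<inter> {0..1}; x \<in> G r\<rbrakk> \<Longrightarrow> Urysohn_function G x \<le> r"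
  unfolding Urysohn_function_def by (force intro: cInf_lower)

lemma Urysohn_function_ge:
  assumes "Urysohn_family Y G" "r \<in> dyadics \<inter> {0..1}" "x \<notin> G r"
  shows "r \<le> Urysohn_function G x"
  unfolding Urysohn_function_def
proof (rule cInf_greatest)
  show "r \<le> s" if "s \<in> insert 1 {s \<in> dyadics \<inter> {0..1}. x \<in> G s}" for s
    using that Urysohn_family_subset[OF assms(1), of s r] assms(2,3) by (cases "s < r") auto
qed auto

lemma Urysohn_function_less_iff:
  "Urysohn_function G x < a \<longleftrightarrow> 1 < a \<or> (\<exists>r \<in> dyadics \<inter> {0..1}. r < a \<and> x \<in> G r)"
  unfolding Urysohn_function_def by (subst cInf_less_iff) (auto intro: bdd_belowI[of _ 0])

lemma Urysohn_function_greater_iff: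
  assumes "Urysohn_family Y G" "0 \<le> a" "x \<in> topspace Y"
  shows "a < Urysohn_function G x \<longleftrightarrow> (\<exists>r \<in> dyadics \<inter> {0..1}. a < r \<and> x \<notin> Y closure_of G r)"
proof
  assume "a < Urysohn_function G x"
  then obtain r s where rs: "r \<in> dyadics" "s \<in> dyadics" "a < r" "r < s" "s < Urysohn_function G x"
    using dyadic_between[OF assms(2)] dyadic_between[OF order_trans[OF assms(2) less_imp_le]]
    by (metis less_imp_le order_trans)
  then have "s \<in> dyadics \<inter> {0..1}" "r \<in> dyadics \<inter> {0..1}"
    using assms(2) Urysohn_function_le_1[of G x] by auto
  moreover from this have "x \<notin> G s"
    using Urysohn_function_le rs(5) by fastforce
  ultimately show "\<exists>r \<in> dyadics \<inter> {0..1}. a < r \<and> x \<notin> Y closure_of G r"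
    using assms(1) rs(3,4) unfolding Urysohn_family_def by blast
next
  assume "\<exists>r \<in> dyadics \<inter> {0..1}. a < r \<and> x \<notin> Y closure_of G r"
  then obtain r where r: "r \<in> dyadics \<inter> {0..1}" "a < r" "x \<notin> Y closure_of G r"
    by blast
  then have "x \<notin> G r"
    using assms(1) closure_of_subset[OF openin_subset] unfolding Urysohn_family_def by blast
  then show "a < Urysohn_function G x"
    using Urysohn_function_ge[OF assms(1) r(1)] r(2) by fastforce
qed

lemma continuous_map_Urysohn_function:
  assumes "Urysohn_family Y G"
  shows "continuous_map Y (top_of_set {0..1}) (Urysohn_function G)"
proof -
  let ?f = "Urysohn_function G"
  have G_open: "openin Y (G r)" if "r \<in> dyadics \<inter> {0..1}" for r
    using assms that by (simp add: Urysohn_family_def)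
  have "openin Y {x \<in> topspace Y. ?f x < a}" for a
  proof (cases "1 < a")
    case True
    then have "{x \<in> topspace Y. ?f x < a} = topspace Y"
      using Urysohn_function_le_1[of G] by (auto intro: le_less_trans)
    then show ?thesis
      by simp
  next
    case False
    have "{x \<in> topspace Y. ?f x < a} = (\<Union>r \<in> {r \<in> dyadics \<inter> {0..1}. r < a}. G r)"
      using False G_open openin_subset by (fastforce simp: Urysohn_function_less_iff)
    then show ?thesis
      using G_open by (auto intro!: openin_Union)
  qed
  moreover have "openin Y {x \<in> topspace Y. a < ?f x}" for a
  proof (cases "a < 0")
    case True
    then have "{x \<in> topspace Y. a < ?f x} = topspace Y"
      using Urysohn_function_nonneg[of G] by (auto intro: less_le_trans)
    then show ?thesis
      by simp
  next
    case False
    then have "0 \<le> a"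
      by simp
    then have "{x \<in> topspace Y. a < ?f x} =
        (\<Union>r \<in> {r \<in> dyadics \<inter> {0..1}. a < r}. topspace Y - Y closure_of G r)"
      by (fastforce simp: Urysohn_function_greater_iff[OF assms])
    then show ?thesis
      by (simp only:) (intro openin_Union, auto)
  qed
  ultimately have "continuous_map Y euclideanreal ?f"
    by (simp add: continuous_map_upper_lower_semicontinuous_lt)
  then show ?thesis
    by (simp add: continuous_map_in_subtopology Urysohn_function_nonneg Urysohn_function_le_1)
qed

lemma Urysohn_function_isotone:
  assumes "\<And>r. r \<in> dyadics \<inter> {0..1} \<Longrightarrow> decreasing_in Y le (G r)" "x \<in> topspace Y" "le x y"
  shows "Urysohn_function G x \<le> Urysohn_function G y"
proof -
  have "{r \<in> dyadics \<inter> {0..1}. y \<in> G r} \<subseteq> {r \<in> dyadics \<inter> {0..1}. x \<in> G r}"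
    using assms unfolding decreasing_in_def by blast
  then show ?thesis
    unfolding Urysohn_function_def by (intro cInf_superset_mono) (auto intro: bdd_belowI[of _ 0])
qed

section \<open>Nachbin's ordered Urysohn lemma\<close>

lemma subset_down_closure:
  "\<lbrakk>T2_ordered Y le; S \<subseteq> topspace Y\<rbrakk> \<Longrightarrow> S \<subseteq> down_closure Y le S"
  unfolding down_closure_def by (blast dest: T2_ordered_refl)

lemma decreasing_down_closure:
  "\<lbrakk>T2_ordered Y le; S \<subseteq> topspace Y\<rbrakk> \<Longrightarrow> decreasing_in Y le (down_closure Y le S)"
  unfolding decreasing_in_def down_closure_def by (auto dest: T2_ordered_trans)

lemma decreasing_down_closure_interpolate:
  assumes Y: "compact_space Y" "T2_ordered Y le"
    and "openin Y V" "decreasing_in Y le V" "down_closure Y le (Y closure_of U) \<subseteq> V"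
  obtains W where "openin Y W" "decreasing_in Y le W" "down_closure Y le (Y closure_of U) \<subseteq> W"
    "down_closure Y le (Y closure_of W) \<subseteq> V"
proof -
  have "closedin Y (down_closure Y le (Y closure_of U))" "decreasing_in Y le (down_closure Y le (Y closure_of U))"
    using closedin_down_up_closure[OF Y closedin_closure_of]
      decreasing_down_closure[OF Y(2) closure_of_subset_topspace] by auto
  then show thesis
    using decreasing_open_separation[OF Y _ _ assms(3-5)] that by blast
qed

lemma decreasing_Urysohn_family:
  assumes Y: "compact_space Y" "T2_ordered Y le"
    and S: "closedin Y S" "decreasing_in Y le S"
    and V: "openin Y V" "decreasing_in Y le V" and "S \<subseteq> V"
  obtains G where "Urysohn_family Y G" "\<And>r. r \<in> dyadics \<inter> {0..1} \<Longrightarrow> decreasing_in Y le (G r)"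
    "S \<subseteq> G 0" "G 1 = V"
proof -
  obtain U where U: "openin Y U" "decreasing_in Y le U" "S \<subseteq> U" "down_closure Y le (Y closure_of U) \<subseteq> V"
    using decreasing_open_separation[OF Y S V \<open>S \<subseteq> V\<close>] by blast
  define R where "R = (\<lambda>W W'. openin Y W \<and> decreasing_in Y le W \<and> openin Y W' \<and> decreasing_in Y le W' \<and>
                               down_closure Y le (Y closure_of W) \<subseteq> W')"
  have "\<exists>G :: real \<Rightarrow> 'a set. G 0 = U \<and> G 1 = V \<and>
      (\<forall>r \<in> dyadics \<inter> {0..1}. \<forall>s \<in> dyadics \<inter> {0..1}. r < s \<longrightarrow> R (G r) (G s))"
  proof (rule recursion_on_dyadic_fractions)
    show "R U V"
      using U V by (simp add: R_def)
    show "\<exists>W''. R W W'' \<and> R W'' W'" if "R W W'" for W W'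
      using that decreasing_down_closure_interpolate[OF Y, of W' W] unfolding R_def by metis
    show "R W W''" if "R W W'" "R W' W''" for W W' W''
    proof -
      have "W' \<subseteq> down_closure Y le (Y closure_of W')"
        using that(2) subset_down_closure[OF Y(2) closure_of_subset_topspace] closure_of_subset[OF openin_subset]
        unfolding R_def by blast
      then show ?thesis
        using that unfolding R_def by blast
    qed
  qed
  then obtain G :: "real \<Rightarrow> 'a set" where G: "G 0 = U" "G 1 = V"
    and GR: "\<And>r s. \<lbrakk>r \<in> dyadics \<inter> {0..1}; s \<in> dyadics \<inter> {0..1}; r < s\<rbrakk> \<Longrightarrow> R (G r) (G s)"
    by blast
  have "1 \<in> (dyadics :: real set) \<inter> {0..1}"
    using real_in_dyadics[of 1] by simp
  then have "openin Y (G r) \<and> decreasing_in Y le (G r)" if "r \<in> dyadics \<inter> {0..1}" for r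
    using GR[of r 1] that G(2) V unfolding R_def by (cases "r = 1") auto
  moreover have "Y closure_of (G r) \<subseteq> G s"
    if "r \<in> dyadics \<inter> {0..1}" "s \<in> dyadics \<inter> {0..1}" "r < s" for r s
    using GR[OF that] subset_down_closure[OF Y(2) closure_of_subset_topspace] unfolding R_def by blast
  ultimately show thesis
    using that[of G] G U(3) by (simp add: Urysohn_family_def)
qed

lemma ordered_Urysohn:
  assumes Y: "compact_space Y" "T2_ordered Y le"
    and p: "p \<in> topspace Y" and q: "q \<in> topspace Y" and "\<not> le p q"
  obtains f where "f \<in> cont_isotone_01 Y le" "f q = 0" "f p = 1"
proof -
  define S where "S = down_closure Y le {q}"
  define V where "V = topspace Y - up_closure Y le {p}"
  have "closedin Y {p}" "closedin Y {q}"
    using T2_ordered_imp_Hausdorff_space[OF Y(2)] p q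
    by (simp_all add: Hausdorff_imp_t1_space closedin_t1_singleton)
  then have S: "closedin Y S" "decreasing_in Y le S" and "openin Y V"
    using closedin_down_up_closure[OF Y] decreasing_down_closure[OF Y(2)] q
    unfolding S_def V_def by blast+
  moreover have "decreasing_in Y le V"
    unfolding decreasing_in_def V_def up_closure_def using T2_ordered_trans[OF Y(2) p] by blast
  moreover have "S \<subseteq> V"
    unfolding S_def V_def down_closure_def up_closure_def
    using T2_ordered_trans[OF Y(2) p _ q] \<open>\<not> le p q\<close> by blast
  ultimately obtain G where G: "Urysohn_family Y G" "\<And>r. r \<in> dyadics \<inter> {0..1} \<Longrightarrow> decreasing_in Y le (G r)"
    "S \<subseteq> G 0" "G 1 = V"
    using decreasing_Urysohn_family[OF Y] by metis
  have dyadics_0_1: "0 \<in> (dyadics :: real set) \<inter> {0..1}" "1 \<in> (dyadics :: real set) \<inter> {0..1}"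
    using real_in_dyadics[of 0] real_in_dyadics[of 1] by simp_all
  have "q \<in> G 0"
    using G(3) q T2_ordered_refl[OF Y(2) q] by (auto simp: S_def down_closure_def)
  then have "Urysohn_function G q = 0"
    using Urysohn_function_le[OF dyadics_0_1(1)] Urysohn_function_nonneg[of G q] by fastforce
  moreover have "p \<notin> G 1"
    using T2_ordered_refl[OF Y(2) p] p G(4) by (auto simp: V_def up_closure_def)
  then have "Urysohn_function G p = 1"
    using Urysohn_function_ge[OF G(1) dyadics_0_1(2)] Urysohn_function_le_1[of G p] by fastforce
  moreover have "Urysohn_function G \<in> cont_isotone_01 Y le"
    using continuous_map_Urysohn_function[OF G(1)] Urysohn_function_isotone[OF G(2)]
    by (simp add: cont_isotone_01_def)
  ultimately show thesis
    using that by blast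
qed

lemma compact_T2_ordered_le_iff:
  assumes "compact_space Y" "T2_ordered Y le" "u \<in> topspace Y" "v \<in> topspace Y"
  shows "le u v \<longleftrightarrow> (\<forall>f \<in> cont_isotone_01 Y le. f u \<le> f v)"
proof
  show "le u v \<Longrightarrow> \<forall>f \<in> cont_isotone_01 Y le. f u \<le> f v"
    using assms(3,4) by (simp add: cont_isotone_01_def)
  show "le u v" if "\<forall>f \<in> cont_isotone_01 Y le. f u \<le> f v"
  proof (rule ccontr)
    assume "\<not> le u v"
    then obtain f where "f \<in> cont_isotone_01 Y le" "f v = 0" "f u = 1"
      using ordered_Urysohn[OF assms] by blast
    then show False
      using that by fastforce
  qed
qed

section \<open>The Nachbin compactification is the largest one\<close>

lemma embedding_map_imp_continuous_map: "embedding_map X Y f \<Longrightarrow> continuous_map X Y f"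
  unfolding embedding_map_def using homeomorphic_imp_continuous_map continuous_map_in_subtopology by blast

lemma cont_isotone_01_isotone:
  "\<lbrakk>f \<in> cont_isotone_01 Y le; x \<in> topspace Y; y \<in> topspace Y; le x y\<rbrakk> \<Longrightarrow> f x \<le> f y"
  by (simp add: cont_isotone_01_def)

lemma cont_isotone_01_continuous_map:
  "f \<in> cont_isotone_01 Y le \<Longrightarrow> continuous_map Y euclideanreal f"
  by (simp add: cont_isotone_01_def continuous_map_in_subtopology)

text \<open>Embed \<open>Y\<^sub>1\<close> into the cube \<open>\<real>\<^sup>I\<close> by the separating family; the image is closed, and by
  density \<open>Y\<^sub>2\<close> is mapped into it by the family \<open>\<psi>\<close>.\<close>
lemma continuous_map_factor_through_separating_family:
  assumes Y1: "compact_space Y1" "Hausdorff_space Y1"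
    and c1: "c1 ` topspace X \<subseteq> topspace Y1"
    and c2: "c2 ` topspace X \<subseteq> topspace Y2" "Y2 closure_of (c2 ` topspace X) = topspace Y2"
    and cont_\<phi>: "\<And>i. i \<in> I \<Longrightarrow> continuous_map Y1 euclideanreal (\<phi> i)"
    and cont_\<psi>: "\<And>i. i \<in> I \<Longrightarrow> continuous_map Y2 euclideanreal (\<psi> i)"
    and agree: "\<And>i x. \<lbrakk>i \<in> I; x \<in> topspace X\<rbrakk> \<Longrightarrow> \<phi> i (c1 x) = \<psi> i (c2 x)"
    and sep: "\<And>u v. \<lbrakk>u \<in> topspace Y1; v \<in> topspace Y1; u \<noteq> v\<rbrakk> \<Longrightarrow> \<exists>i\<in>I. \<phi> i u \<noteq> \<phi> i v"
  obtains C where "continuous_map Y2 Y1 C" "\<And>x. x \<in> topspace X \<Longrightarrow> C (c2 x) = c1 x"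
    "\<And>i y. \<lbrakk>i \<in> I; y \<in> topspace Y2\<rbrakk> \<Longrightarrow> \<phi> i (C y) = \<psi> i y"
proof -
  define P where "P = product_topology (\<lambda>i. euclideanreal) I"
  define e1 where "e1 = (\<lambda>y. restrict (\<lambda>i. \<phi> i y) I)"
  define e2 where "e2 = (\<lambda>y. restrict (\<lambda>i. \<psi> i y) I)"
  have e1: "continuous_map Y1 P e1" and e2: "continuous_map Y2 P e2"
    using cont_\<phi> cont_\<psi> by (auto simp: P_def e1_def e2_def continuous_map_componentwise)
  have "inj_on e1 (topspace Y1)"
    using sep by (fastforce simp: inj_on_def e1_def fun_eq_iff)
  moreover have "Hausdorff_space P"
    by (simp add: P_def Hausdorff_space_product_topology)
  then have "closed_map Y1 P e1"
    using continuous_imp_closed_map_gen[OF Y1(1) Hausdorff_imp_kc_space e1] by blast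
  ultimately have "embedding_map Y1 P e1"
    using e1 by (simp add: injective_closed_imp_embedding_map)
  then obtain g where g: "homeomorphic_maps Y1 (subtopology P (e1 ` topspace Y1)) e1 g"
    by (meson embedding_map_def homeomorphic_map_maps)
  have "e2 ` topspace Y2 \<subseteq> e1 ` topspace Y1"
  proof -
    have "closedin P (e1 ` topspace Y1)"
      using \<open>closed_map Y1 P e1\<close> closed_map_def by blast
    moreover have "e2 ` c2 ` topspace X \<subseteq> e1 ` topspace Y1"
      using agree c1 by (force simp: e1_def e2_def)
    ultimately have "P closure_of (e2 ` c2 ` topspace X) \<subseteq> e1 ` topspace Y1"
      by (simp add: closure_of_minimal)
    moreover have "e2 ` topspace Y2 \<subseteq> P closure_of (e2 ` c2 ` topspace X)"
      using continuous_map_image_closure_subset[OF e2] c2(2) by metis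
    ultimately show ?thesis
      by blast
  qed
  then have e2_sub: "continuous_map Y2 (subtopology P (e1 ` topspace Y1)) e2"
    by (simp add: continuous_map_in_subtopology e2 image_subset_iff_funcset)
  define C where "C = g \<circ> e2"
  have "continuous_map Y2 Y1 C"
    unfolding C_def using e2_sub g by (auto simp: homeomorphic_maps_def intro: continuous_map_compose)
  moreover have e1_C: "e1 (C y) = e2 y" if "y \<in> topspace Y2" for y
    using g that \<open>e2 ` topspace Y2 \<subseteq> e1 ` topspace Y1\<close> by (auto simp: homeomorphic_maps_def C_def)
  moreover have "C (c2 x) = c1 x" if "x \<in> topspace X" for x
  proof -
    have "e2 (c2 x) = e1 (c1 x)"
      using agree that by (auto simp: e1_def e2_def)
    then show ?thesis
      using g c1 that by (auto simp: homeomorphic_maps_def C_def)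
  qed
  moreover have "\<phi> i (C y) = \<psi> i y" if "i \<in> I" "y \<in> topspace Y2" for i y
    using e1_C[OF that(2)] that(1) by (metis e1_def e2_def restrict_apply')
  ultimately show thesis
    using that by blast
qed

lemma Nachbin_compactification_extends_comp:
  assumes c1: "T2_order_compactification X le c1 Y1 le1"
    and c2: "Nachbin_compactification X le c2 Y2 le2"
    and i: "i \<in> cont_isotone_01 Y1 le1"
  shows "\<exists>g\<in>cont_isotone_01 Y2 le2. \<forall>x\<in>topspace X. g (c2 x) = i (c1 x)"
proof -
  have emb1: "embedding_map X Y1 c1"
    and iso1: "\<And>x y. \<lbrakk>x \<in> topspace X; y \<in> topspace X\<rbrakk> \<Longrightarrow> le x y \<longleftrightarrow> le1 (c1 x) (c1 y)"
    using c1 by (auto simp: T2_order_compactification_def)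
  then have "i \<circ> c1 \<in> cont_isotone_01 X le"
    using i continuous_map_compose[OF embedding_map_imp_continuous_map[OF emb1]]
      continuous_map_image_subset_topspace[OF embedding_map_imp_continuous_map[OF emb1]]
    by (auto simp: cont_isotone_01_def image_subset_iff)
  then obtain g where "g \<in> cont_isotone_01 Y2 le2" "\<forall>x\<in>topspace X. g (c2 x) = (i \<circ> c1) x"
    using c2 unfolding Nachbin_compactification_def by blast
  then show ?thesis
    by auto
qed

lemma compactification_le_Nachbin:
  assumes c1: "T2_order_compactification X le c1 Y1 le1"
    and c2: "Nachbin_compactification X le c2 Y2 le2"
  shows "compactification_le X c1 Y1 le1 c2 Y2 le2"
proof -
  let ?I = "cont_isotone_01 Y1 le1"
  have Y1: "compact_space Y1" "Hausdorff_space Y1" "T2_ordered Y1 le1"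
    and c1_into: "c1 ` topspace X \<subseteq> topspace Y1"
    using c1 embedding_map_imp_continuous_map continuous_map_image_subset_topspace
    by (fastforce simp: T2_order_compactification_def)+
  have Y2: "c2 ` topspace X \<subseteq> topspace Y2" "Y2 closure_of (c2 ` topspace X) = topspace Y2"
    using c2 embedding_map_imp_continuous_map continuous_map_image_subset_topspace
    by (fastforce simp: Nachbin_compactification_def T2_order_compactification_def)+
  have "\<forall>i\<in>?I. \<exists>g. g \<in> cont_isotone_01 Y2 le2 \<and> (\<forall>x\<in>topspace X. g (c2 x) = i (c1 x))"
    using Nachbin_compactification_extends_comp[OF c1 c2] by blast
  then obtain \<psi> where \<psi>: "\<forall>i\<in>?I. \<psi> i \<in> cont_isotone_01 Y2 le2 \<and> (\<forall>x\<in>topspace X. \<psi> i (c2 x) = i (c1 x))"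
    by (rule bchoice[THEN exE])
  have le1_iff: "le1 u v \<longleftrightarrow> (\<forall>i\<in>?I. i u \<le> i v)" if "u \<in> topspace Y1" "v \<in> topspace Y1" for u v
    using compact_T2_ordered_le_iff[OF Y1(1,3) that] .
  obtain C where C: "continuous_map Y2 Y1 C" "\<And>x. x \<in> topspace X \<Longrightarrow> C (c2 x) = c1 x"
    "\<And>i y. \<lbrakk>i \<in> ?I; y \<in> topspace Y2\<rbrakk> \<Longrightarrow> i (C y) = \<psi> i y"
  proof (rule continuous_map_factor_through_separating_family[OF Y1(1,2) c1_into Y2, of ?I "\<lambda>i. i" \<psi>])
    show "continuous_map Y1 euclideanreal i" "continuous_map Y2 euclideanreal (\<psi> i)" if "i \<in> ?I" for i
      using that \<psi> by (auto intro: cont_isotone_01_continuous_map)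
    show "\<exists>i\<in>?I. i u \<noteq> i v" if "u \<in> topspace Y1" "v \<in> topspace Y1" "u \<noteq> v" for u v
    proof (rule ccontr)
      assume "\<not> (\<exists>i\<in>?I. i u \<noteq> i v)"
      then have "le1 u v" "le1 v u"
        using le1_iff that by auto
      then show False
        using T2_ordered_antisym[OF Y1(3) that(1,2)] that(3) by blast
    qed
  qed (use \<psi> in auto)
  have "le1 (C u) (C v)" if "u \<in> topspace Y2" "v \<in> topspace Y2" "le2 u v" for u v
  proof -
    have "i (C u) \<le> i (C v)" if "i \<in> ?I" for i
      using \<psi> that cont_isotone_01_isotone[of "\<psi> i" Y2 le2 u v] \<open>le2 u v\<close> C(3)[OF that]
        \<open>u \<in> topspace Y2\<close> \<open>v \<in> topspace Y2\<close> by simp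
    moreover have "C u \<in> topspace Y1" "C v \<in> topspace Y1"
      using C(1) that(1,2) continuous_map_image_subset_topspace by blast+
    ultimately show ?thesis
      using le1_iff by blast
  qed
  then show ?thesis
    unfolding compactification_le_def using C by blast
qed

lemma compactification_equiv_Nachbin:
  assumes "Nachbin_compactification X le c1 Y1 le1" "Nachbin_compactification X le c2 Y2 le2"
  shows "compactification_equiv X c1 Y1 le1 c2 Y2 le2"
  using compactification_le_Nachbin[OF _ assms(2)] compactification_le_Nachbin[OF _ assms(1)] assms
  unfolding compactification_equiv_def Nachbin_compactification_def by blast

lemma openin_quotient_topology:
  "openin (quotient_topology X p) U \<longleftrightarrow> U \<subseteq> p ` topspace X \<and> openin X {x \<in> topspace X. p x \<in> U}"
proof -
  have "istopology (\<lambda>U. U \<subseteq> p ` topspace X \<and> openin X {x \<in> topspace X. p x \<in> U})"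
  proof -
    have "{x \<in> topspace X. p x \<in> S \<inter> T} = {x \<in> topspace X. p x \<in> S} \<inter> {x \<in> topspace X. p x \<in> T}"
      and "{x \<in> topspace X. p x \<in> \<Union>K} = (\<Union>S\<in>K. {x \<in> topspace X. p x \<in> S})" for S T K
      by auto
    then show ?thesis
      unfolding istopology_def by auto
  qed
  then show ?thesis
    unfolding quotient_topology_def by (simp add: topology_inverse')
qed

lemma topspace_quotient_topology: "topspace (quotient_topology X p) = p ` topspace X"
proof -
  have "{x \<in> topspace X. p x \<in> p ` topspace X} = topspace X"
    by auto
  then have "openin (quotient_topology X p) (p ` topspace X)"
    by (simp add: openin_quotient_topology)
  moreover have "topspace (quotient_topology X p) \<subseteq> p ` topspace X"
    using openin_quotient_topology[of X p "topspace (quotient_topology X p)"] by simp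
  ultimately show ?thesis
    by (simp add: openin_subset subset_antisym)
qed

lemma quotient_map_quotient_topology: "quotient_map X (quotient_topology X p) p"
  unfolding quotient_map_def topspace_quotient_topology openin_quotient_topology by auto

lemma T2_ordered_by_continuous_functions:
  assumes cont: "\<And>i. i \<in> I \<Longrightarrow> continuous_map Y euclideanreal (\<phi> i)"
    and sep: "\<And>u v. \<lbrakk>u \<in> topspace Y; v \<in> topspace Y; \<forall>i\<in>I. \<phi> i u = \<phi> i v\<rbrakk> \<Longrightarrow> u = v"
    and le: "\<And>u v. le u v \<longleftrightarrow> u \<in> topspace Y \<and> v \<in> topspace Y \<and> (\<forall>i\<in>I. \<phi> i u \<le> \<phi> i v)"
  shows "T2_ordered Y le"
proof -
  have "order_on (topspace Y) le"
    unfolding order_on_def le using sep by (fastforce intro: order_antisym order_trans)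
  moreover have "closedin (prod_topology Y Y) {z \<in> topspace (prod_topology Y Y). \<phi> i (snd z) - \<phi> i (fst z) \<in> {0..}}"
    if "i \<in> I" for i
  proof (rule closedin_continuous_map_preimage[of _ euclideanreal])
    show "continuous_map (prod_topology Y Y) euclideanreal (\<lambda>z. \<phi> i (snd z) - \<phi> i (fst z))"
      using continuous_map_compose[OF continuous_map_snd cont[OF that]]
        continuous_map_compose[OF continuous_map_fst cont[OF that]]
      by (intro continuous_map_diff) (simp_all add: o_def)
  qed simp
  then have "closedin (prod_topology Y Y) (\<Inter>(insert (topspace (prod_topology Y Y))
      ((\<lambda>i. {z \<in> topspace (prod_topology Y Y). \<phi> i (snd z) - \<phi> i (fst z) \<in> {0..}}) ` I)))"
    by (intro closedin_Inter) (auto simp del: topspace_prod_topology)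
  moreover have "\<Inter>(insert (topspace (prod_topology Y Y))
      ((\<lambda>i. {z \<in> topspace (prod_topology Y Y). \<phi> i (snd z) - \<phi> i (fst z) \<in> {0..}}) ` I))
      = {(x, y). x \<in> topspace Y \<and> y \<in> topspace Y \<and> le x y}"
    by (auto simp: le)
  ultimately show ?thesis
    by (simp add: T2_ordered_def)
qed

lemma embedding_map_initial_topology:
  assumes X: "X = topology_generated_by {{x \<in> topspace X. f x \<in> U} | f U. f \<in> F \<and> open U}"
    and c: "continuous_map X Y c" "inj_on c (topspace X)"
    and h: "\<And>f. f \<in> F \<Longrightarrow> continuous_map Y euclideanreal (h f)"
      "\<And>f x. \<lbrakk>f \<in> F; x \<in> topspace X\<rbrakk> \<Longrightarrow> h f (c x) = f x"
  shows "embedding_map X Y c"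
proof -
  define SS where "SS = {{x \<in> topspace X. f x \<in> U} | f U. f \<in> F \<and> open U}"
  define g where "g = inv_into (topspace X) c"
  let ?Z = "subtopology Y (c ` topspace X)"
  have XSS: "X = topology_generated_by SS"
    using X by (simp add: SS_def)
  have "continuous_map ?Z (topology_generated_by SS) g"
  proof (rule continuous_on_generated_topo)
    fix S assume "S \<in> SS"
    then obtain f U where S: "S = {x \<in> topspace X. f x \<in> U}" "f \<in> F" "open U"
      by (auto simp: SS_def)
    have "g -` S \<inter> topspace ?Z = c ` topspace X \<inter> {y \<in> topspace Y. h f y \<in> U}"
      using c h(2)[OF S(2)] continuous_map_image_subset_topspace[OF c(1)]
      by (auto simp: S g_def inv_into_into)
    moreover have "openin Y {y \<in> topspace Y. h f y \<in> U}"
      using openin_continuous_map_preimage[OF h(1)[OF S(2)]] S(3) by simp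
    ultimately show "openin ?Z (g -` S \<inter> topspace ?Z)"
      by (simp add: openin_subtopology_Int2)
  next
    have "g ` topspace ?Z \<subseteq> topspace X"
      by (auto simp: g_def inv_into_into)
    then show "g ` topspace ?Z \<subseteq> \<Union>SS"
      by (metis XSS topology_generated_by_topspace)
  qed
  then have "homeomorphic_maps X ?Z c g"
    using c XSS by (simp add: homeomorphic_maps_def continuous_map_in_subtopology g_def
        image_subset_iff_funcset continuous_map_funspace inv_into_into f_inv_into_f)
  then show ?thesis
    unfolding embedding_map_def homeomorphic_map_maps by blast
qed

section \<open>The ordered quotient of the Stone--Cech compactification\<close>

locale ordered_Stone_Cech =
  fixes X :: "'a topology" and le :: "'a \<Rightarrow> 'a \<Rightarrow> bool"
    and bt :: "'a \<Rightarrow> 'b" and B :: "'b topology"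
  assumes completely_regularly_ordered: "completely_regularly_ordered X le"
    and Stone_Cech: "Stone_Cech_compactification X bt B"
begin

abbreviation "F \<equiv> cont_isotone_01 X le"
abbreviation "cls \<equiv> beta_class X le bt B"
abbreviation "Q \<equiv> quotient_topology B cls"
abbreviation "c \<equiv> cls \<circ> bt"

text \<open>The paper's \<open>f~\<close>; by \<open>extension_unique\<close> the choice made here is immaterial.\<close>
definition extension :: "('a \<Rightarrow> real) \<Rightarrow> 'b \<Rightarrow> real" where
  "extension f = (SOME g. continuous_map B (top_of_set {0..1}) g \<and> (\<forall>x\<in>topspace X. g (bt x) = f x))"

lemma order_on_X: "order_on (topspace X) le"
  using completely_regularly_ordered by (simp add: completely_regularly_ordered_def)

lemma le_iff_cont_isotone: "\<lbrakk>x \<in> topspace X; y \<in> topspace X\<rbrakk> \<Longrightarrow> le x y \<longleftrightarrow> (\<forall>f\<in>F. f x \<le> f y)"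
  using completely_regularly_ordered by (simp add: completely_regularly_ordered_def)

lemma compact_space_B: "compact_space B"
  and embedding_map_bt: "embedding_map X B bt"
  and closure_of_bt: "B closure_of (bt ` topspace X) = topspace B"
  using Stone_Cech by (auto simp: Stone_Cech_compactification_def)

lemma bt_into: "bt ` topspace X \<subseteq> topspace B"
  using embedding_map_imp_continuous_map[OF embedding_map_bt] continuous_map_image_subset_topspace by blast

lemma extension_spec:
  assumes "f \<in> F"
  shows "continuous_map B (top_of_set {0..1}) (extension f)" "\<And>x. x \<in> topspace X \<Longrightarrow> extension f (bt x) = f x"
proof -
  have "\<exists>g. continuous_map B (top_of_set {0..1}) g \<and> (\<forall>x\<in>topspace X. g (bt x) = f x)"
    using Stone_Cech assms by (simp add: Stone_Cech_compactification_def cont_isotone_01_def)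
  then have "continuous_map B (top_of_set {0..1}) (extension f) \<and> (\<forall>x\<in>topspace X. extension f (bt x) = f x)"
    unfolding extension_def by (rule someI_ex)
  then show "continuous_map B (top_of_set {0..1}) (extension f)" "\<And>x. x \<in> topspace X \<Longrightarrow> extension f (bt x) = f x"
    by auto
qed

lemma extension_unique:
  assumes "f \<in> F" "continuous_map B (top_of_set {0..1}) g" "\<And>x. x \<in> topspace X \<Longrightarrow> g (bt x) = f x"
    and "a \<in> topspace B"
  shows "g a = extension f a"
proof (rule forall_in_closure_of_eq[OF _ _ assms(2) extension_spec(1)[OF assms(1)]])
  show "a \<in> B closure_of (bt ` topspace X)"
    using assms(4) closure_of_bt by simp
  show "Hausdorff_space (top_of_set {0..1::real})"
    by (simp add: Hausdorff_space_subtopology)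
qed (use assms(3) extension_spec(2)[OF assms(1)] in auto)

lemma beta_le_iff:
  "beta_le X le bt B a b \<longleftrightarrow> a \<in> topspace B \<and> b \<in> topspace B \<and> (\<forall>f\<in>F. extension f a \<le> extension f b)"
proof -
  have "(\<forall>g. continuous_map B (top_of_set {0..1}) g \<and> (\<forall>x\<in>topspace X. g (bt x) = f x) \<longrightarrow> g a \<le> g b)
      \<longleftrightarrow> extension f a \<le> extension f b"
    if "f \<in> F" "a \<in> topspace B" "b \<in> topspace B" for f
    using extension_spec[OF that(1)] extension_unique[OF that(1)] that(2,3) by metis
  then show ?thesis
    unfolding beta_le_def by blast
qed

lemma beta_class_eq_iff:
  assumes "a \<in> topspace B" "b \<in> topspace B"
  shows "cls a = cls b \<longleftrightarrow> (\<forall>f\<in>F. extension f a = extension f b)"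
proof
  assume "cls a = cls b"
  then have "b \<in> cls a"
    using assms(2) by (simp add: beta_class_def beta_le_iff)
  then show "\<forall>f\<in>F. extension f a = extension f b"
    by (auto simp: beta_class_def beta_le_iff intro: order_antisym)
qed (use assms in \<open>auto simp: beta_class_def beta_le_iff\<close>)

lemma topspace_Q: "topspace Q = cls ` topspace B"
  by (rule topspace_quotient_topology)

definition quotient_extension :: "('a \<Rightarrow> real) \<Rightarrow> 'b set \<Rightarrow> real" where
  "quotient_extension f P = extension f (SOME a. a \<in> topspace B \<and> cls a = P)"

lemma quotient_extension_cls:
  assumes "a \<in> topspace B" "f \<in> F"
  shows "quotient_extension f (cls a) = extension f a"
proof -
  have "\<exists>b. b \<in> topspace B \<and> cls b = cls a"
    using assms by blast
  then have "(SOME b. b \<in> topspace B \<and> cls b = cls a) \<in> topspace B \<and>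
      cls (SOME b. b \<in> topspace B \<and> cls b = cls a) = cls a"
    by (rule someI_ex)
  then show ?thesis
    using beta_class_eq_iff assms by (auto simp: quotient_extension_def)
qed

lemma continuous_map_quotient_extension:
  assumes "f \<in> F"
  shows "continuous_map Q (top_of_set {0..1}) (quotient_extension f)"
proof (rule continuous_compose_quotient_map[OF quotient_map_quotient_topology])
  show "continuous_map B (top_of_set {0..1}) (quotient_extension f \<circ> cls)"
    using extension_spec(1)[OF assms] by (rule continuous_map_eq) (simp add: quotient_extension_cls assms)
qed

lemma quotient_extension_c: "\<lbrakk>f \<in> F; x \<in> topspace X\<rbrakk> \<Longrightarrow> quotient_extension f (c x) = f x"
  using bt_into quotient_extension_cls extension_spec(2) by auto

lemma beta_quot_le_iff:
  "beta_quot_le X le bt B P R \<longleftrightarrow>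
     P \<in> topspace Q \<and> R \<in> topspace Q \<and> (\<forall>f\<in>F. quotient_extension f P \<le> quotient_extension f R)"
proof
  assume "beta_quot_le X le bt B P R"
  then obtain a b where "a \<in> topspace B" "b \<in> topspace B" "P = cls a" "R = cls b"
    "beta_le X le bt B a b"
    by (auto simp: beta_quot_le_def)
  then show "P \<in> topspace Q \<and> R \<in> topspace Q \<and> (\<forall>f\<in>F. quotient_extension f P \<le> quotient_extension f R)"
    using topspace_Q quotient_extension_cls beta_le_iff by auto
next
  assume R: "P \<in> topspace Q \<and> R \<in> topspace Q \<and> (\<forall>f\<in>F. quotient_extension f P \<le> quotient_extension f R)"
  then obtain a b where ab: "a \<in> topspace B" "b \<in> topspace B" "P = cls a" "R = cls b"
    using topspace_Q by auto
  then have "beta_le X le bt B a b"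
    using R quotient_extension_cls beta_le_iff by auto
  then show "beta_quot_le X le bt B P R"
    using ab by (auto simp: beta_quot_le_def)
qed

lemma quotient_extension_separates_points:
  assumes "P \<in> topspace Q" "R \<in> topspace Q" "\<forall>f\<in>F. quotient_extension f P = quotient_extension f R"
  shows "P = R"
proof -
  obtain a b where ab: "a \<in> topspace B" "b \<in> topspace B" "P = cls a" "R = cls b"
    using assms(1,2) topspace_Q by auto
  then show ?thesis
    using assms(3) beta_class_eq_iff quotient_extension_cls by simp
qed

lemma T2_ordered_Q: "T2_ordered Q (beta_quot_le X le bt B)"
  using continuous_map_quotient_extension[THEN continuous_map_into_fulltopology]
    quotient_extension_separates_points beta_quot_le_iff
  by (rule T2_ordered_by_continuous_functions)

lemma embedding_map_c: "embedding_map X Q c"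
proof (rule embedding_map_initial_topology[where F = F])
  show "X = topology_generated_by {{x \<in> topspace X. f x \<in> U} | f U. f \<in> F \<and> open U}"
    using completely_regularly_ordered by (simp add: completely_regularly_ordered_def)
  show "continuous_map X Q c"
    using embedding_map_imp_continuous_map[OF embedding_map_bt] quotient_imp_continuous_map[OF quotient_map_quotient_topology]
    by (rule continuous_map_compose)
  show "inj_on c (topspace X)"
  proof (rule inj_onI)
    fix x y assume xy: "x \<in> topspace X" "y \<in> topspace X" "c x = c y"
    have "\<forall>f\<in>F. f x = f y"
      using quotient_extension_c xy by metis
    then have "le x y" "le y x"
      using le_iff_cont_isotone[OF xy(1,2)] le_iff_cont_isotone[OF xy(2,1)] by auto
    then show "x = y"
      using order_on_X xy(1,2) unfolding order_on_def by blast
  qed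
qed (use continuous_map_quotient_extension[THEN continuous_map_into_fulltopology] quotient_extension_c in auto)

lemma Nachbin_compactification_Q: "Nachbin_compactification X le c Q (beta_quot_le X le bt B)"
proof -
  have c_into: "c x \<in> topspace Q" if "x \<in> topspace X" for x
    using that bt_into topspace_Q by auto
  have "compact_space Q"
    using image_compactin[OF compact_space_B[unfolded compact_space_def]
        quotient_imp_continuous_map[OF quotient_map_quotient_topology]]
    by (simp add: compact_space_def topspace_Q)
  moreover have "Q closure_of (c ` topspace X) = topspace Q"
  proof -
    have "topspace Q = cls ` (B closure_of (bt ` topspace X))"
      by (simp add: topspace_Q closure_of_bt)
    also have "\<dots> \<subseteq> Q closure_of (c ` topspace X)"
      using continuous_map_image_closure_subset[OF
          quotient_imp_continuous_map[OF quotient_map_quotient_topology[of B cls]], of "bt ` topspace X"]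
      by (simp add: image_comp)
    finally show ?thesis
      by (simp add: closure_of_subset_topspace subset_antisym)
  qed
  moreover have "le x y \<longleftrightarrow> beta_quot_le X le bt B (c x) (c y)" if "x \<in> topspace X" "y \<in> topspace X" for x y
    using le_iff_cont_isotone[OF that] beta_quot_le_iff c_into that quotient_extension_c by simp
  moreover have "quotient_extension f \<in> cont_isotone_01 Q (beta_quot_le X le bt B)" if "f \<in> F" for f
    using continuous_map_quotient_extension[OF that] that beta_quot_le_iff by (simp add: cont_isotone_01_def)
  ultimately show ?thesis
    unfolding Nachbin_compactification_def T2_order_compactification_def
    using T2_ordered_Q T2_ordered_imp_Hausdorff_space embedding_map_c quotient_extension_c by blast
qed

end

theorem mainTheorem10:
  fixes X :: "'a topology" and le :: "'a \<Rightarrow> 'a \<Rightarrow> bool"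
    and bt :: "'a \<Rightarrow> 'b" and B :: "'b topology"
    and n :: "'a \<Rightarrow> 'c" and N :: "'c topology" and leN :: "'c \<Rightarrow> 'c \<Rightarrow> bool"
  assumes "completely_regularly_ordered X le"
    and "Stone_Cech_compactification X bt B"
    and "Nachbin_compactification X le n N leN"
  shows "T2_order_compactification X le (beta_class X le bt B \<circ> bt)
           (quotient_topology B (beta_class X le bt B)) (beta_quot_le X le bt B)
       \<and> compactification_equiv X (beta_class X le bt B \<circ> bt)
           (quotient_topology B (beta_class X le bt B)) (beta_quot_le X le bt B) n N leN"
proof -
  interpret ordered_Stone_Cech X le bt B
    using assms(1,2) by unfold_locales
  show ?thesis
    using Nachbin_compactification_Q compactification_equiv_Nachbin[OF Nachbin_compactification_Q assms(3)]
    by (simp add: Nachbin_compactification_def)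
qed

end
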